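(* Let $F,F'$ be topological hyperfields, $F''$ a hyperfield, and $f:F\to F''$, $f':F'\to F''$ hyperfield morphisms. Let $*\in\{s,w\}$ and $M\in\operatorname{Gr}^*(r,F''^n)$. Suppose $H:F_0\times[0,1]\to F'_0$ is a hyperfield homotopy with $f'(H(x,t))=f(x)$ for all $x\in F$ and $t\in[0,1]$. Then $([\varphi],t)\mapsto[H_t\circ\varphi]$ defines a continuous map (homotopy) $$\operatorname{Real}^*_F(M)\times[0,1]\to\operatorname{Real}^*_{F'}(M).$$
   Context: Hyperfields. A hyperfield $(F,\odot,\boxplus,1,0)$ has the following data and axioms. - $\odot$ is a commutative multiplication and $\boxplus$ is a hyperaddition assigning to each $x,y$ a nonempty subset $x\boxplus y\subseteq F$ (extended to subsets by unions). - $\boxplus$ is commutative and associative, and $x\boxplus 0=\{x\}$. - Each $x$ has a unique $-x$ with $0\in x\boxplus(-x)$, and $x\in y\boxplus z \iff z\in x\boxplus(-y)$. - $(F\setminus\{0\},\odot,1)$ is an abelian group $F^\times$, $0\odot x=0$, and $x\odot(y\boxplus z)=(x\odot y)\boxplus(x\odot z)$. A homomorphism (morphism) $h$ satisfies $h(0)=0$, $h(1)=1$, $h(xy)=h(x)h(y)$ and $h(x\boxplus y)\subseteq h(x)\boxplus h(y)$. Topological hyperfields. A topological hyperfield is a hyperfield with a topology $T$ in which $F\setminus\{0\}$ is open, multiplication is continuous, and inversion on $F^\times$ is continuous. $F_0$ is $F$ with the 0-coarse topology, whose open sets are $F$ and all $U\in T$ with $0\notin U$. A hyperfield homotopy is a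 continuous $H:F\times[0,1]\to F'$ with each $H_t=H(\cdot,t)$ a hyperfield homomorphism. Grassmannians. A strong Grassmann–Plücker (GP) function of rank $r$ on $E=\{1,\dots,n\}$ is a function $\varphi:E^r\to F$ with the following properties. - $\varphi$ is not identically $0$. - $\varphi$ is alternating. - For all $(i_1,\dots,i_{r+1})\in E^{r+1}$ and $(j_1,\dots,j_{r-1})\in E^{r-1}$: $$0\in\boxplus_{k=1}^{r+1}(-1)^k\varphi(i_1,\dots,\widehat{i_k},\dots,i_{r+1})\odot\varphi(i_k,j_1,\dots,j_{r-1}).$$ A weak GP function is a function $\varphi:E^r\to F$ with the following properties. - $\varphi$ is nonzero and alternating. - Its support is the set of bases of a matroid. - The relation holds whenever $|\{i\}\setminus\{j\}|=3$. $\operatorname{Gr}^s(r,F^n)$ and $\operatorname{Gr}^w(r,F^n)$ are the sets of classes of strong, resp. weak, GP functions modulo $\varphi\sim\alpha\varphi$, $\alpha\in F^\times$. For topological $F$ they have the subspace topology of $(F^{E^r}\setminus\{0\})/F^\times$, which carries the product and quotient topologies. Realization spaces. A morphism $f$ induces $\operatorname{Gr}^*(f):[\varphi]\mapsto[f\circ\varphi]$. For $M\in\operatorname{Gr}^*(r,F''^n)$, the realization space $\operatorname{Real}^*_F(M)=\operatorname{Gr}^*(f)^{-1}(M)\subseteq\operatorname{Gr}^*(r,F^n)$ has the subspace topology, computed with the given topology of $F$. *)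

theory Defs
  imports "HOL-Analysis.Analysis" "HOL-Combinatorics.Permutations"
begin

record 'a hyperfield =
  hf_carrier :: "'a set"
  hf_mul :: "'a \<Rightarrow> 'a \<Rightarrow> 'a"
  hf_add :: "'a \<Rightarrow> 'a \<Rightarrow> 'a set"
  hf_one :: 'a
  hf_zero :: 'a

definition hf_addset :: "('a, 'm) hyperfield_scheme \<Rightarrow> 'a set \<Rightarrow> 'a set \<Rightarrow> 'a set" where
  "hf_addset F A B = (\<Union>x\<in>A. \<Union>y\<in>B. hf_add F x y)"

definition hyperfield :: "('a, 'm) hyperfield_scheme \<Rightarrow> bool" where
  "hyperfield F \<longleftrightarrow>
     (let K = hf_carrier F; z = hf_zero F; e = hf_one F in
      z \<in> K \<and> e \<in> K \<and> e \<noteq> z \<and>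
      (\<forall>x\<in>K. \<forall>y\<in>K. hf_mul F x y \<in> K) \<and>
      (\<forall>x\<in>K. \<forall>y\<in>K. hf_add F x y \<noteq> {} \<and> hf_add F x y \<subseteq> K) \<and>
      (\<forall>x\<in>K. \<forall>y\<in>K. hf_add F x y = hf_add F y x) \<and>
      (\<forall>x\<in>K. \<forall>y\<in>K. \<forall>w\<in>K.
          hf_addset F (hf_add F x y) {w} = hf_addset F {x} (hf_add F y w)) \<and>
      (\<forall>x\<in>K. hf_add F x z = {x}) \<and>
      (\<forall>x\<in>K. \<exists>!y. y \<in> K \<and> z \<in> hf_add F x y) \<and>
      (\<forall>x\<in>K. \<forall>y\<in>K. \<forall>w\<in>K. \<forall>ny\<in>K. z \<in> hf_add F y ny \<longrightarrow>
          (x \<in> hf_add F y w \<longleftrightarrow> w \<in> hf_add F x ny)) \<and>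
      (\<forall>x\<in>K. \<forall>y\<in>K. hf_mul F x y = hf_mul F y x) \<and>
      (\<forall>x\<in>K. \<forall>y\<in>K. \<forall>w\<in>K. hf_mul F (hf_mul F x y) w = hf_mul F x (hf_mul F y w)) \<and>
      (\<forall>x\<in>K - {z}. \<forall>y\<in>K - {z}. hf_mul F x y \<noteq> z) \<and>
      (\<forall>x\<in>K. hf_mul F e x = x) \<and>
      (\<forall>x\<in>K - {z}. \<exists>y\<in>K - {z}. hf_mul F x y = e) \<and>
      (\<forall>x\<in>K. hf_mul F z x = z) \<and>
      (\<forall>x\<in>K. \<forall>y\<in>K. \<forall>w\<in>K.
          hf_mul F x ` hf_add F y w = hf_add F (hf_mul F x y) (hf_mul F x w)))"

definition hf_neg :: "('a, 'm) hyperfield_scheme \<Rightarrow> 'a \<Rightarrow> 'a" where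
  "hf_neg F x = (THE y. y \<in> hf_carrier F \<and> hf_zero F \<in> hf_add F x y)"

definition hf_inv :: "('a, 'm) hyperfield_scheme \<Rightarrow> 'a \<Rightarrow> 'a" where
  "hf_inv F x = (THE y. y \<in> hf_carrier F \<and> hf_mul F x y = hf_one F)"

definition hf_signpow :: "('a, 'm) hyperfield_scheme \<Rightarrow> nat \<Rightarrow> 'a" where
  "hf_signpow F k = (if even k then hf_one F else hf_neg F (hf_one F))"

definition hf_sign :: "('a, 'm) hyperfield_scheme \<Rightarrow> (nat \<Rightarrow> nat) \<Rightarrow> 'a" where
  "hf_sign F \<sigma> = (if sign \<sigma> = 1 then hf_one F else hf_neg F (hf_one F))"

fun hf_sum :: "('a, 'm) hyperfield_scheme \<Rightarrow> 'a list \<Rightarrow> 'a set" where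
  "hf_sum F [] = {hf_zero F}"
| "hf_sum F (x # xs) = hf_addset F {x} (hf_sum F xs)"

definition hf_hom :: "('a, 'm) hyperfield_scheme \<Rightarrow> ('b, 'n) hyperfield_scheme \<Rightarrow> ('a \<Rightarrow> 'b) \<Rightarrow> bool" where
  "hf_hom F F' h \<longleftrightarrow>
     h ` hf_carrier F \<subseteq> hf_carrier F' \<and>
     h (hf_zero F) = hf_zero F' \<and> h (hf_one F) = hf_one F' \<and>
     (\<forall>x\<in>hf_carrier F. \<forall>y\<in>hf_carrier F. h (hf_mul F x y) = hf_mul F' (h x) (h y)) \<and>
     (\<forall>x\<in>hf_carrier F. \<forall>y\<in>hf_carrier F. h ` hf_add F x y \<subseteq> hf_add F' (h x) (h y))"

definition topological_hyperfield :: "('a, 'm) hyperfield_scheme \<Rightarrow> 'a topology \<Rightarrow> bool" where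
  "topological_hyperfield F T \<longleftrightarrow>
     hyperfield F \<and> topspace T = hf_carrier F \<and>
     openin T (hf_carrier F - {hf_zero F}) \<and>
     continuous_map (prod_topology T T) T (\<lambda>(x, y). hf_mul F x y) \<and>
     continuous_map (subtopology T (hf_carrier F - {hf_zero F}))
                    (subtopology T (hf_carrier F - {hf_zero F})) (hf_inv F)"

definition zero_coarse :: "('a, 'm) hyperfield_scheme \<Rightarrow> 'a topology \<Rightarrow> 'a topology" where
  "zero_coarse F T = topology (\<lambda>U. U = topspace T \<or> (openin T U \<and> hf_zero F \<notin> U))"

definition tuples :: "nat \<Rightarrow> nat \<Rightarrow> nat list set" where
  "tuples r n = {xs. length xs = r \<and> set xs \<subseteq> {1..n}}"

definition hf_funs :: "('a, 'm) hyperfield_scheme \<Rightarrow> nat \<Rightarrow> nat \<Rightarrow> (nat list \<Rightarrow> 'a) set" where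
  "hf_funs F r n = (tuples r n \<rightarrow>\<^sub>E hf_carrier F)"

definition alternating :: "('a, 'm) hyperfield_scheme \<Rightarrow> nat \<Rightarrow> nat \<Rightarrow> (nat list \<Rightarrow> 'a) \<Rightarrow> bool" where
  "alternating F r n \<phi> \<longleftrightarrow>
     (\<forall>xs\<in>tuples r n. \<not> distinct xs \<longrightarrow> \<phi> xs = hf_zero F) \<and>
     (\<forall>xs\<in>tuples r n. \<forall>\<sigma>. \<sigma> permutes {..<r} \<longrightarrow>
        \<phi> (permute_list \<sigma> xs) = hf_mul F (hf_sign F \<sigma>) (\<phi> xs))"

text \<open>The Grassmann-Pluecker relation for \<open>(i_1..i_{r+1})\<close> and \<open>(j_1..j_{r-1})\<close>
  (list positions are 0-based, so the \<open>k\<close>-th term carries \<open>(-1)^(k+1)\<close>).\<close>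
definition gp_relation :: "('a, 'm) hyperfield_scheme \<Rightarrow> (nat list \<Rightarrow> 'a) \<Rightarrow> nat list \<Rightarrow> nat list \<Rightarrow> bool" where
  "gp_relation F \<phi> is js \<longleftrightarrow>
     hf_zero F \<in> hf_sum F
       (map (\<lambda>k. hf_mul F (hf_signpow F (k + 1))
                   (hf_mul F (\<phi> (take k is @ drop (Suc k) is)) (\<phi> ((is ! k) # js))))
            [0..<length is])"

definition strong_GP :: "('a, 'm) hyperfield_scheme \<Rightarrow> nat \<Rightarrow> nat \<Rightarrow> (nat list \<Rightarrow> 'a) \<Rightarrow> bool" where
  "strong_GP F r n \<phi> \<longleftrightarrow>
     \<phi> \<in> hf_funs F r n \<and>
     (\<exists>xs\<in>tuples r n. \<phi> xs \<noteq> hf_zero F) \<and>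
     alternating F r n \<phi> \<and>
     (\<forall>is js. length is = r + 1 \<and> set is \<subseteq> {1..n} \<and> length js + 1 = r \<and> set js \<subseteq> {1..n}
        \<longrightarrow> gp_relation F \<phi> is js)"

definition matroid_bases :: "'e set \<Rightarrow> 'e set set \<Rightarrow> bool" where
  "matroid_bases E \<B> \<longleftrightarrow>
     \<B> \<noteq> {} \<and> (\<forall>B\<in>\<B>. B \<subseteq> E) \<and>
     (\<forall>B1\<in>\<B>. \<forall>B2\<in>\<B>. \<forall>x\<in>B1 - B2. \<exists>y\<in>B2 - B1. insert y (B1 - {x}) \<in> \<B>)"

definition weak_GP :: "('a, 'm) hyperfield_scheme \<Rightarrow> nat \<Rightarrow> nat \<Rightarrow> (nat list \<Rightarrow> 'a) \<Rightarrow> bool" where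
  "weak_GP F r n \<phi> \<longleftrightarrow>
     \<phi> \<in> hf_funs F r n \<and>
     (\<exists>xs\<in>tuples r n. \<phi> xs \<noteq> hf_zero F) \<and>
     alternating F r n \<phi> \<and>
     matroid_bases {1..n} {set xs | xs. xs \<in> tuples r n \<and> \<phi> xs \<noteq> hf_zero F} \<and>
     (\<forall>is js. length is = r + 1 \<and> set is \<subseteq> {1..n} \<and> length js + 1 = r \<and> set js \<subseteq> {1..n}
        \<and> card (set is - set js) = 3
        \<longrightarrow> gp_relation F \<phi> is js)"

datatype gp_kind = Strong | Weak

definition GP :: "gp_kind \<Rightarrow> ('a, 'm) hyperfield_scheme \<Rightarrow> nat \<Rightarrow> nat \<Rightarrow> (nat list \<Rightarrow> 'a) \<Rightarrow> bool" where
  "GP k F r n \<phi> = (case k of Strong \<Rightarrow> strong_GP F r n \<phi> | Weak \<Rightarrow> weak_GP F r n \<phi>)"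

definition gp_class :: "('a, 'm) hyperfield_scheme \<Rightarrow> nat \<Rightarrow> nat \<Rightarrow> (nat list \<Rightarrow> 'a) \<Rightarrow> (nat list \<Rightarrow> 'a) set" where
  "gp_class F r n \<phi> =
     {restrict (\<lambda>xs. hf_mul F \<alpha> (\<phi> xs)) (tuples r n) | \<alpha>. \<alpha> \<in> hf_carrier F - {hf_zero F}}"

definition Gr :: "gp_kind \<Rightarrow> ('a, 'm) hyperfield_scheme \<Rightarrow> nat \<Rightarrow> nat \<Rightarrow> (nat list \<Rightarrow> 'a) set set" where
  "Gr k F r n = gp_class F r n ` {\<phi>. GP k F r n \<phi>}"

definition quotient_topology :: "'x topology \<Rightarrow> ('x \<Rightarrow> 'y) \<Rightarrow> 'y topology" where
  "quotient_topology X q =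
     topology (\<lambda>U. U \<subseteq> q ` topspace X \<and> openin X {x \<in> topspace X. q x \<in> U})"

definition proj_space_top :: "('a, 'm) hyperfield_scheme \<Rightarrow> 'a topology \<Rightarrow> nat \<Rightarrow> nat \<Rightarrow> (nat list \<Rightarrow> 'a) set topology" where
  "proj_space_top F T r n =
     quotient_topology
       (subtopology (product_topology (\<lambda>_. T) (tuples r n))
          (hf_funs F r n - {restrict (\<lambda>_. hf_zero F) (tuples r n)}))
       (gp_class F r n)"

definition Gr_top :: "gp_kind \<Rightarrow> ('a, 'm) hyperfield_scheme \<Rightarrow> 'a topology \<Rightarrow> nat \<Rightarrow> nat \<Rightarrow> (nat list \<Rightarrow> 'a) set topology" where
  "Gr_top k F T r n = subtopology (proj_space_top F T r n) (Gr k F r n)"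

definition gp_comp :: "nat \<Rightarrow> nat \<Rightarrow> ('a \<Rightarrow> 'b) \<Rightarrow> (nat list \<Rightarrow> 'a) \<Rightarrow> (nat list \<Rightarrow> 'b)" where
  "gp_comp r n h \<phi> = restrict (h \<circ> \<phi>) (tuples r n)"

definition Real_set :: "gp_kind \<Rightarrow> ('a, 'm) hyperfield_scheme \<Rightarrow> ('c, 'o) hyperfield_scheme \<Rightarrow> ('a \<Rightarrow> 'c) \<Rightarrow> nat \<Rightarrow> nat \<Rightarrow> (nat list \<Rightarrow> 'c) set \<Rightarrow> (nat list \<Rightarrow> 'a) set set" where
  "Real_set k F F'' f r n M =
     {C \<in> Gr k F r n. \<forall>\<phi>\<in>C. gp_class F'' r n (gp_comp r n f \<phi>) = M}"

definition Real_top :: "gp_kind \<Rightarrow> ('a, 'm) hyperfield_scheme \<Rightarrow> 'a topology \<Rightarrow> ('c, 'o) hyperfield_scheme \<Rightarrow> ('a \<Rightarrow> 'c) \<Rightarrow> nat \<Rightarrow> nat \<Rightarrow> (nat list \<Rightarrow> 'c) set \<Rightarrow> (nat list \<Rightarrow> 'a) set topology" where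
  "Real_top k F T F'' f r n M = subtopology (Gr_top k F T r n) (Real_set k F F'' f r n M)"

end

theory Submission
  imports Defs
begin

text \<open>
  Composition with a hyperfield morphism maps Grassmann-Pluecker functions to Grassmann-Pluecker
  functions and commutes with scaling by units, so each \<open>H_t\<close> acts on classes; since
  \<open>f' \<circ> H_t = f\<close>, it maps realizations of \<open>M\<close> to realizations of \<open>M\<close>.
  All representatives of points of \<open>Real_F(M)\<close> have the support of \<open>M\<close>, so each
  coordinate \<open>\<phi>(e)\<close> either vanishes identically or stays among the units, where the
  0-coarse topology is the given one; hence \<open>(\<phi>, t) \<mapsto> H_t \<circ> \<phi>\<close> is continuous on
  representatives. The projection to classes is open, because scaling by a unit is continuous,
  so its product with \<open>[0,1]\<close> is a quotient map, and the homotopy descends.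
\<close>

lemma
  assumes "hyperfield F"
  shows hf_zero_closed: "hf_zero F \<in> hf_carrier F"
    and hf_one_closed: "hf_one F \<in> hf_carrier F"
    and hf_one_neq_zero: "hf_one F \<noteq> hf_zero F"
    and hf_mul_closed: "\<lbrakk>x \<in> hf_carrier F; y \<in> hf_carrier F\<rbrakk> \<Longrightarrow> hf_mul F x y \<in> hf_carrier F"
    and hf_add_subset: "\<lbrakk>x \<in> hf_carrier F; y \<in> hf_carrier F\<rbrakk> \<Longrightarrow> hf_add F x y \<subseteq> hf_carrier F"
    and hf_neg_ex1: "x \<in> hf_carrier F \<Longrightarrow> \<exists>!y. y \<in> hf_carrier F \<and> hf_zero F \<in> hf_add F x y"
    and hf_mul_comm: "\<lbrakk>x \<in> hf_carrier F; y \<in> hf_carrier F\<rbrakk> \<Longrightarrow> hf_mul F x y = hf_mul F y x"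
    and hf_mul_assoc: "\<lbrakk>x \<in> hf_carrier F; y \<in> hf_carrier F; z \<in> hf_carrier F\<rbrakk>
                         \<Longrightarrow> hf_mul F (hf_mul F x y) z = hf_mul F x (hf_mul F y z)"
    and hf_mul_neq_zero: "\<lbrakk>x \<in> hf_carrier F; y \<in> hf_carrier F; x \<noteq> hf_zero F; y \<noteq> hf_zero F\<rbrakk>
                         \<Longrightarrow> hf_mul F x y \<noteq> hf_zero F"
    and hf_mul_one_left: "x \<in> hf_carrier F \<Longrightarrow> hf_mul F (hf_one F) x = x"
    and hf_inverse_ex: "\<lbrakk>x \<in> hf_carrier F; x \<noteq> hf_zero F\<rbrakk>
                         \<Longrightarrow> \<exists>y\<in>hf_carrier F - {hf_zero F}. hf_mul F x y = hf_one F"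
    and hf_mul_zero_left: "x \<in> hf_carrier F \<Longrightarrow> hf_mul F (hf_zero F) x = hf_zero F"
proof -
  note ax = assms[unfolded hyperfield_def Let_def]
  have comm: "\<forall>x\<in>hf_carrier F. \<forall>y\<in>hf_carrier F. hf_mul F x y = hf_mul F y x"
    using ax by (elim conjE) assumption
  have assoc: "\<forall>x\<in>hf_carrier F. \<forall>y\<in>hf_carrier F. \<forall>w\<in>hf_carrier F.
                 hf_mul F (hf_mul F x y) w = hf_mul F x (hf_mul F y w)"
    using ax by (elim conjE) assumption
  have inv: "\<forall>x\<in>hf_carrier F - {hf_zero F}. \<exists>y\<in>hf_carrier F - {hf_zero F}. hf_mul F x y = hf_one F"
    using ax by (elim conjE) assumption
  show "hf_zero F \<in> hf_carrier F" "hf_one F \<in> hf_carrier F" "hf_one F \<noteq> hf_zero F"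
    using ax by auto
  show "\<lbrakk>x \<in> hf_carrier F; y \<in> hf_carrier F\<rbrakk> \<Longrightarrow> hf_mul F x y \<in> hf_carrier F"
    "\<lbrakk>x \<in> hf_carrier F; y \<in> hf_carrier F\<rbrakk> \<Longrightarrow> hf_add F x y \<subseteq> hf_carrier F"
    "x \<in> hf_carrier F \<Longrightarrow> \<exists>!y. y \<in> hf_carrier F \<and> hf_zero F \<in> hf_add F x y"
    using ax by auto
  show "\<lbrakk>x \<in> hf_carrier F; y \<in> hf_carrier F; x \<noteq> hf_zero F; y \<noteq> hf_zero F\<rbrakk>
          \<Longrightarrow> hf_mul F x y \<noteq> hf_zero F"
    "x \<in> hf_carrier F \<Longrightarrow> hf_mul F (hf_one F) x = x"
    "x \<in> hf_carrier F \<Longrightarrow> hf_mul F (hf_zero F) x = hf_zero F"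
    using ax by auto
  show "\<lbrakk>x \<in> hf_carrier F; y \<in> hf_carrier F\<rbrakk> \<Longrightarrow> hf_mul F x y = hf_mul F y x"
    using comm by blast
  show "\<lbrakk>x \<in> hf_carrier F; y \<in> hf_carrier F; z \<in> hf_carrier F\<rbrakk>
          \<Longrightarrow> hf_mul F (hf_mul F x y) z = hf_mul F x (hf_mul F y z)"
    using assoc by blast
  show "\<lbrakk>x \<in> hf_carrier F; x \<noteq> hf_zero F\<rbrakk> \<Longrightarrow> \<exists>y\<in>hf_carrier F - {hf_zero F}. hf_mul F x y = hf_one F"
    using inv by blast
qed

lemma hf_mul_eq_zero_iff:
  assumes "hyperfield F" "x \<in> hf_carrier F" "y \<in> hf_carrier F"
  shows "hf_mul F x y = hf_zero F \<longleftrightarrow> x = hf_zero F \<or> y = hf_zero F"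
  using assms hf_mul_neq_zero hf_mul_zero_left hf_mul_comm by metis

lemma
  assumes "hyperfield F" "x \<in> hf_carrier F"
  shows hf_neg_closed: "hf_neg F x \<in> hf_carrier F"
    and hf_zero_in_add_neg: "hf_zero F \<in> hf_add F x (hf_neg F x)"
  using theI'[OF hf_neg_ex1[OF assms]] unfolding hf_neg_def by auto

lemma hf_neg_unique:
  assumes "hyperfield F" "x \<in> hf_carrier F" "y \<in> hf_carrier F" "hf_zero F \<in> hf_add F x y"
  shows "hf_neg F x = y"
  unfolding hf_neg_def by (rule the1_equality) (use hf_neg_ex1[OF assms(1,2)] assms(3,4) in simp_all)

lemma
  assumes "hf_hom F F' h"
  shows hf_hom_closed: "x \<in> hf_carrier F \<Longrightarrow> h x \<in> hf_carrier F'"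
    and hf_hom_zero: "h (hf_zero F) = hf_zero F'"
    and hf_hom_one: "h (hf_one F) = hf_one F'"
    and hf_hom_mul: "\<lbrakk>x \<in> hf_carrier F; y \<in> hf_carrier F\<rbrakk> \<Longrightarrow> h (hf_mul F x y) = hf_mul F' (h x) (h y)"
    and hf_hom_add: "\<lbrakk>x \<in> hf_carrier F; y \<in> hf_carrier F; z \<in> hf_add F x y\<rbrakk>
                       \<Longrightarrow> h z \<in> hf_add F' (h x) (h y)"
  using assms unfolding hf_hom_def by blast+

lemma hf_hom_eq_zero_iff:
  assumes "hyperfield F" "hyperfield F'" "hf_hom F F' h" "x \<in> hf_carrier F"
  shows "h x = hf_zero F' \<longleftrightarrow> x = hf_zero F"
proof
  assume hx: "h x = hf_zero F'"
  show "x = hf_zero F"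
  proof (rule ccontr)
    assume "x \<noteq> hf_zero F"
    then obtain y where y: "y \<in> hf_carrier F" "hf_mul F x y = hf_one F"
      using hf_inverse_ex[OF assms(1,4)] by auto
    have "hf_one F' = hf_mul F' (h x) (h y)"
      using hf_hom_mul[OF assms(3,4) y(1)] hf_hom_one[OF assms(3)] y(2) by simp
    also have "\<dots> = hf_zero F'"
      using hx hf_mul_zero_left[OF assms(2) hf_hom_closed[OF assms(3) y(1)]] by simp
    finally show False using hf_one_neq_zero[OF assms(2)] by simp
  qed
qed (use hf_hom_zero[OF assms(3)] in simp)

lemma hf_hom_neg_one:
  assumes "hyperfield F" "hyperfield F'" "hf_hom F F' h"
  shows "h (hf_neg F (hf_one F)) = hf_neg F' (hf_one F')"
proof (rule hf_neg_unique[symmetric])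
  have one: "hf_one F \<in> hf_carrier F" using hf_one_closed[OF assms(1)] .
  show "hf_one F' \<in> hf_carrier F'" using hf_one_closed[OF assms(2)] .
  show "h (hf_neg F (hf_one F)) \<in> hf_carrier F'"
    using hf_hom_closed[OF assms(3) hf_neg_closed[OF assms(1) one]] .
  show "hf_zero F' \<in> hf_add F' (hf_one F') (h (hf_neg F (hf_one F)))"
    using hf_hom_add[OF assms(3) one hf_neg_closed[OF assms(1) one] hf_zero_in_add_neg[OF assms(1) one]]
    by (simp add: hf_hom_zero[OF assms(3)] hf_hom_one[OF assms(3)])
qed (rule assms(2))

lemma
  assumes "hyperfield F"
  shows hf_sign_closed: "hf_sign F \<sigma> \<in> hf_carrier F"
    and hf_signpow_closed: "hf_signpow F k \<in> hf_carrier F"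
  unfolding hf_sign_def hf_signpow_def
  using hf_one_closed[OF assms] hf_neg_closed[OF assms hf_one_closed[OF assms]] by simp_all

lemma
  assumes "hyperfield F" "hyperfield F'" "hf_hom F F' h"
  shows hf_hom_sign: "h (hf_sign F \<sigma>) = hf_sign F' \<sigma>"
    and hf_hom_signpow: "h (hf_signpow F k) = hf_signpow F' k"
  unfolding hf_sign_def hf_signpow_def
  by (simp_all add: hf_hom_neg_one[OF assms] hf_hom_one[OF assms(3)])

lemma hf_sum_subset_carrier:
  assumes "hyperfield F" "set xs \<subseteq> hf_carrier F"
  shows "hf_sum F xs \<subseteq> hf_carrier F"
  using assms(2)
  by (induction xs) (auto simp: hf_addset_def hf_zero_closed[OF assms(1)] dest: hf_add_subset[OF assms(1)])

lemma hf_hom_sum: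
  assumes "hyperfield F" "hf_hom F F' h" "set xs \<subseteq> hf_carrier F"
  shows "h ` hf_sum F xs \<subseteq> hf_sum F' (map h xs)"
  using assms(3)
proof (induction xs)
  case Nil
  then show ?case by (simp add: hf_hom_zero[OF assms(2)])
next
  case (Cons x xs)
  have "h w \<in> hf_sum F' (map h (x # xs))" if "y \<in> hf_sum F xs" "w \<in> hf_add F x y" for y w
  proof -
    have "y \<in> hf_carrier F" using that(1) hf_sum_subset_carrier[OF assms(1)] Cons.prems by auto
    then have "h w \<in> hf_add F' (h x) (h y)" using hf_hom_add[OF assms(2) _ _ that(2)] Cons.prems by simp
    moreover have "h y \<in> hf_sum F' (map h xs)" using Cons that(1) by auto
    ultimately show ?thesis by (auto simp: hf_addset_def)
  qed
  then show ?case by (auto simp: hf_addset_def)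
qed

lemma hf_funsD: "\<phi> \<in> hf_funs F r n \<Longrightarrow> xs \<in> tuples r n \<Longrightarrow> \<phi> xs \<in> hf_carrier F"
  unfolding hf_funs_def by auto

lemma gp_comp_apply [simp]: "xs \<in> tuples r n \<Longrightarrow> gp_comp r n h \<phi> xs = h (\<phi> xs)"
  unfolding gp_comp_def by simp

lemma gp_comp_in_hf_funs: "hf_hom F F' h \<Longrightarrow> \<phi> \<in> hf_funs F r n \<Longrightarrow> gp_comp r n h \<phi> \<in> hf_funs F' r n"
  unfolding hf_funs_def gp_comp_def using hf_hom_closed[of F F' h] by (auto simp: PiE_iff)

lemma gp_comp_eq_zero_iff:
  assumes "hyperfield F" "hyperfield F'" "hf_hom F F' h" "\<phi> \<in> hf_funs F r n" "xs \<in> tuples r n"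
  shows "gp_comp r n h \<phi> xs = hf_zero F' \<longleftrightarrow> \<phi> xs = hf_zero F"
  using hf_hom_eq_zero_iff[OF assms(1-3) hf_funsD[OF assms(4,5)]] assms(5) by simp

lemma GP_in_hf_funs: "GP k F r n \<phi> \<Longrightarrow> \<phi> \<in> hf_funs F r n"
  by (cases k) (simp_all add: GP_def strong_GP_def weak_GP_def)

definition gp_term :: "('a, 'm) hyperfield_scheme \<Rightarrow> (nat list \<Rightarrow> 'a) \<Rightarrow> nat list \<Rightarrow> nat list \<Rightarrow> nat \<Rightarrow> 'a"
  where "gp_term F \<phi> is js k = hf_mul F (hf_signpow F (k + 1))
           (hf_mul F (\<phi> (take k is @ drop (Suc k) is)) (\<phi> ((is ! k) # js)))"

lemma gp_relation_iff: "gp_relation F \<phi> is js \<longleftrightarrow> hf_zero F \<in> hf_sum F (map (gp_term F \<phi> is js) [0..<length is])"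
  unfolding gp_relation_def gp_term_def ..

lemma gp_relation_hom:
  assumes "hyperfield F" "hyperfield F'" "hf_hom F F' h" "\<phi> \<in> hf_funs F r n"
    and "length is = r + 1" "set is \<subseteq> {1..n}" "length js + 1 = r" "set js \<subseteq> {1..n}"
    and "gp_relation F \<phi> is js"
  shows "gp_relation F' (gp_comp r n h \<phi>) is js"
proof -
  have tuples: "take k is @ drop (Suc k) is \<in> tuples r n" "(is ! k) # js \<in> tuples r n"
    if "k < length is" for k
  proof -
    have "is ! k \<in> {1..n}" using nth_mem[OF that] assms(6) by blast
    then show "take k is @ drop (Suc k) is \<in> tuples r n" "(is ! k) # js \<in> tuples r n"
      using that assms(5-8) set_take_subset[of k "is"] set_drop_subset[of "Suc k" "is"]
      unfolding tuples_def by auto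
  qed
  have term_closed: "gp_term F \<phi> is js k \<in> hf_carrier F" if "k < length is" for k
    unfolding gp_term_def using tuples[OF that]
    by (simp add: hf_mul_closed[OF assms(1)] hf_signpow_closed[OF assms(1)] hf_funsD[OF assms(4)])
  have hom_term: "h (gp_term F \<phi> is js k) = gp_term F' (gp_comp r n h \<phi>) is js k" if "k < length is" for k
    unfolding gp_term_def using tuples[OF that]
    by (simp add: hf_hom_mul[OF assms(3)] hf_mul_closed[OF assms(1)] hf_signpow_closed[OF assms(1)]
        hf_funsD[OF assms(4)] hf_hom_signpow[OF assms(1-3)])
  have "set (map (gp_term F \<phi> is js) [0..<length is]) \<subseteq> hf_carrier F"
    using term_closed by auto
  then have "h (hf_zero F) \<in> hf_sum F' (map h (map (gp_term F \<phi> is js) [0..<length is]))"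
    using assms(9) hf_hom_sum[OF assms(1,3)] unfolding gp_relation_iff by blast
  also have "map h (map (gp_term F \<phi> is js) [0..<length is])
           = map (gp_term F' (gp_comp r n h \<phi>) is js) [0..<length is]"
    using hom_term by simp
  finally show ?thesis
    unfolding gp_relation_iff hf_hom_zero[OF assms(3)] .
qed

lemma alternating_hom:
  assumes "hyperfield F" "hyperfield F'" "hf_hom F F' h" "\<phi> \<in> hf_funs F r n"
    and "alternating F r n \<phi>"
  shows "alternating F' r n (gp_comp r n h \<phi>)"
  unfolding alternating_def
proof (intro conjI ballI allI impI)
  fix xs assume "xs \<in> tuples r n" "\<not> distinct xs"
  then show "gp_comp r n h \<phi> xs = hf_zero F'"
    using assms(5) hf_hom_zero[OF assms(3)] unfolding alternating_def by simp
next
  fix xs \<sigma> assume xs: "xs \<in> tuples r n" and \<sigma>: "\<sigma> permutes {..<r}"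
  then have "permute_list \<sigma> xs \<in> tuples r n"
    unfolding tuples_def by (auto simp: set_permute_list)
  with xs \<sigma> assms(5) show "gp_comp r n h \<phi> (permute_list \<sigma> xs) = hf_mul F' (hf_sign F' \<sigma>) (gp_comp r n h \<phi> xs)"
    unfolding alternating_def
    by (simp add: hf_hom_mul[OF assms(3)] hf_sign_closed[OF assms(1)] hf_funsD[OF assms(4)]
        hf_hom_sign[OF assms(1-3)])
qed

lemma GP_hom:
  assumes "hyperfield F" "hyperfield F'" "hf_hom F F' h" "GP k F r n \<phi>"
  shows "GP k F' r n (gp_comp r n h \<phi>)"
proof -
  have funs: "\<phi> \<in> hf_funs F r n" and alt: "alternating F r n \<phi>"
    and nz: "\<exists>xs\<in>tuples r n. \<phi> xs \<noteq> hf_zero F"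
    using assms(4) by (cases k; simp add: GP_def strong_GP_def weak_GP_def)+
  have zero_iff: "gp_comp r n h \<phi> xs = hf_zero F' \<longleftrightarrow> \<phi> xs = hf_zero F" if "xs \<in> tuples r n" for xs
    using gp_comp_eq_zero_iff[OF assms(1-3) funs that] .
  have common: "gp_comp r n h \<phi> \<in> hf_funs F' r n" "alternating F' r n (gp_comp r n h \<phi>)"
      "\<exists>xs\<in>tuples r n. gp_comp r n h \<phi> xs \<noteq> hf_zero F'"
    using gp_comp_in_hf_funs[OF assms(3) funs] alternating_hom[OF assms(1-3) funs alt] nz zero_iff
    by auto
  have bases: "{set xs |xs. xs \<in> tuples r n \<and> gp_comp r n h \<phi> xs \<noteq> hf_zero F'}
             = {set xs |xs. xs \<in> tuples r n \<and> \<phi> xs \<noteq> hf_zero F}"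
    using zero_iff by blast
  note rel = gp_relation_hom[OF assms(1-3) funs]
  show ?thesis
  proof (cases k)
    case Strong
    then have rel_F: "\<forall>is js. length is = r + 1 \<and> set is \<subseteq> {1..n} \<and> length js + 1 = r \<and> set js \<subseteq> {1..n}
        \<longrightarrow> gp_relation F \<phi> is js"
      using assms(4) unfolding GP_def strong_GP_def by simp
    have "strong_GP F' r n (gp_comp r n h \<phi>)"
      unfolding strong_GP_def using common rel rel_F by blast
    then show ?thesis unfolding GP_def Strong by simp
  next
    case Weak
    then have rel_F: "\<forall>is js. length is = r + 1 \<and> set is \<subseteq> {1..n} \<and> length js + 1 = r \<and> set js \<subseteq> {1..n}
        \<and> card (set is - set js) = 3 \<longrightarrow> gp_relation F \<phi> is js"
      and matroid: "matroid_bases {1..n} {set xs |xs. xs \<in> tuples r n \<and> \<phi> xs \<noteq> hf_zero F}"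
      using assms(4) unfolding GP_def weak_GP_def by simp_all
    have "weak_GP F' r n (gp_comp r n h \<phi>)"
      unfolding weak_GP_def bases using common matroid rel rel_F by blast
    then show ?thesis unfolding GP_def Weak by simp
  qed
qed

definition gp_scale :: "('a, 'm) hyperfield_scheme \<Rightarrow> nat \<Rightarrow> nat \<Rightarrow> 'a \<Rightarrow> (nat list \<Rightarrow> 'a) \<Rightarrow> (nat list \<Rightarrow> 'a)"
  where "gp_scale F r n \<alpha> \<phi> = restrict (\<lambda>xs. hf_mul F \<alpha> (\<phi> xs)) (tuples r n)"

lemma gp_class_altdef: "gp_class F r n \<phi> = {gp_scale F r n \<alpha> \<phi> |\<alpha>. \<alpha> \<in> hf_carrier F - {hf_zero F}}"
  unfolding gp_class_def gp_scale_def ..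

lemma gp_scale_apply [simp]: "xs \<in> tuples r n \<Longrightarrow> gp_scale F r n \<alpha> \<phi> xs = hf_mul F \<alpha> (\<phi> xs)"
  unfolding gp_scale_def by simp

lemma gp_scale_in_hf_funs:
  "hyperfield F \<Longrightarrow> \<alpha> \<in> hf_carrier F \<Longrightarrow> \<phi> \<in> hf_funs F r n \<Longrightarrow> gp_scale F r n \<alpha> \<phi> \<in> hf_funs F r n"
  unfolding gp_scale_def hf_funs_def by (auto simp: hf_mul_closed PiE_iff)

lemma gp_scale_gp_scale:
  assumes "hyperfield F" "\<alpha> \<in> hf_carrier F" "\<beta> \<in> hf_carrier F" "\<phi> \<in> hf_funs F r n"
  shows "gp_scale F r n \<beta> (gp_scale F r n \<alpha> \<phi>) = gp_scale F r n (hf_mul F \<beta> \<alpha>) \<phi>"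
  unfolding gp_scale_def using assms by (auto simp: hf_mul_assoc hf_funsD intro!: restrict_ext)

lemma gp_scale_one:
  assumes "hyperfield F" "\<phi> \<in> hf_funs F r n"
  shows "gp_scale F r n (hf_one F) \<phi> = \<phi>"
  using assms unfolding gp_scale_def hf_funs_def
  by (auto simp: hf_mul_one_left PiE_iff extensional_def fun_eq_iff)

lemma gp_class_gp_scale:
  assumes F: "hyperfield F" and \<alpha>: "\<alpha> \<in> hf_carrier F" "\<alpha> \<noteq> hf_zero F" and \<phi>: "\<phi> \<in> hf_funs F r n"
  shows "gp_class F r n (gp_scale F r n \<alpha> \<phi>) = gp_class F r n \<phi>"
proof -
  obtain \<delta> where \<delta>: "\<delta> \<in> hf_carrier F" "\<delta> \<noteq> hf_zero F" "hf_mul F \<alpha> \<delta> = hf_one F"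
    using hf_inverse_ex[OF F \<alpha>] by auto
  have units: "hf_mul F \<beta> \<gamma> \<in> hf_carrier F - {hf_zero F}"
    if "\<beta> \<in> hf_carrier F - {hf_zero F}" "\<gamma> \<in> hf_carrier F - {hf_zero F}" for \<beta> \<gamma>
    using that hf_mul_closed[OF F] hf_mul_neq_zero[OF F] by auto
  have undo: "gp_scale F r n (hf_mul F \<beta> \<delta>) (gp_scale F r n \<alpha> \<phi>) = gp_scale F r n \<beta> \<phi>"
    if "\<beta> \<in> hf_carrier F" for \<beta>
  proof -
    have "hf_mul F (hf_mul F \<beta> \<delta>) \<alpha> = hf_mul F \<beta> (hf_mul F \<alpha> \<delta>)"
      using that \<alpha> \<delta> by (simp add: hf_mul_assoc[OF F] hf_mul_comm[OF F, of \<delta> \<alpha>])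
    also have "\<dots> = \<beta>"
      using that \<delta>(3) by (simp add: hf_mul_comm[OF F _ hf_one_closed[OF F]] hf_mul_one_left[OF F])
    finally show ?thesis
      using that \<alpha> \<delta> by (simp add: gp_scale_gp_scale[OF F] hf_mul_closed[OF F] \<phi>)
  qed
  show ?thesis
  proof
    show "gp_class F r n (gp_scale F r n \<alpha> \<phi>) \<subseteq> gp_class F r n \<phi>"
      unfolding gp_class_altdef using \<alpha> units by (auto simp: gp_scale_gp_scale[OF F] \<phi>)
    show "gp_class F r n \<phi> \<subseteq> gp_class F r n (gp_scale F r n \<alpha> \<phi>)"
      unfolding gp_class_altdef using \<delta> units undo by (fastforce simp flip: undo)
  qed
qed

lemma gp_class_self: "hyperfield F \<Longrightarrow> \<phi> \<in> hf_funs F r n \<Longrightarrow> \<phi> \<in> gp_class F r n \<phi>"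
  unfolding gp_class_altdef by (metis (mono_tags, lifting) Diff_iff empty_iff gp_scale_one
      hf_one_closed hf_one_neq_zero insert_iff mem_Collect_eq)

lemma gp_class_eqE:
  assumes "hyperfield F" "\<psi> \<in> hf_funs F r n" "gp_class F r n \<phi> = gp_class F r n \<psi>"
  obtains \<alpha> where "\<alpha> \<in> hf_carrier F" "\<alpha> \<noteq> hf_zero F" "\<psi> = gp_scale F r n \<alpha> \<phi>"
  using gp_class_self[OF assms(1,2)] assms(3) unfolding gp_class_altdef by auto

lemma gp_comp_gp_scale:
  assumes "hf_hom F F' h" "\<alpha> \<in> hf_carrier F" "\<phi> \<in> hf_funs F r n"
  shows "gp_comp r n h (gp_scale F r n \<alpha> \<phi>) = gp_scale F' r n (h \<alpha>) (gp_comp r n h \<phi>)"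
  unfolding gp_comp_def gp_scale_def
  using assms by (auto simp: hf_hom_mul hf_funsD intro!: restrict_ext)

lemma gp_class_gp_comp:
  assumes "hyperfield F" "hyperfield F'" "hf_hom F F' h" "\<phi> \<in> hf_funs F r n" "\<psi> \<in> hf_funs F r n"
    and "gp_class F r n \<phi> = gp_class F r n \<psi>"
  shows "gp_class F' r n (gp_comp r n h \<phi>) = gp_class F' r n (gp_comp r n h \<psi>)"
proof -
  obtain \<alpha> where \<alpha>: "\<alpha> \<in> hf_carrier F" "\<alpha> \<noteq> hf_zero F" and \<psi>: "\<psi> = gp_scale F r n \<alpha> \<phi>"
    using gp_class_eqE[OF assms(1,5,6)] .
  show ?thesis
    unfolding \<psi> gp_comp_gp_scale[OF assms(3) \<alpha>(1) assms(4)]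
    using gp_class_gp_scale[OF assms(2) hf_hom_closed[OF assms(3) \<alpha>(1)] _ gp_comp_in_hf_funs[OF assms(3,4)]]
      hf_hom_eq_zero_iff[OF assms(1-3) \<alpha>(1)] \<alpha>(2)
    by simp
qed

lemma gp_class_eq_zero_iff:
  assumes "hyperfield F" "\<phi> \<in> hf_funs F r n" "\<psi> \<in> hf_funs F r n"
    and "gp_class F r n \<phi> = gp_class F r n \<psi>" "xs \<in> tuples r n"
  shows "\<phi> xs = hf_zero F \<longleftrightarrow> \<psi> xs = hf_zero F"
proof -
  obtain \<alpha> where "\<alpha> \<in> hf_carrier F" "\<alpha> \<noteq> hf_zero F" "\<psi> = gp_scale F r n \<alpha> \<phi>"
    using gp_class_eqE[OF assms(1,3,4)] .
  then show ?thesis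
    using assms(5) hf_mul_eq_zero_iff[OF assms(1)] hf_funsD[OF assms(2,5)] by simp
qed

lemma Real_set_iff:
  assumes "hyperfield F" "hyperfield F''" "hf_hom F F'' f"
  shows "C \<in> Real_set k F F'' f r n M \<longleftrightarrow>
           (\<exists>\<phi>. GP k F r n \<phi> \<and> C = gp_class F r n \<phi> \<and> gp_class F'' r n (gp_comp r n f \<phi>) = M)"
proof
  assume "C \<in> Real_set k F F'' f r n M"
  then obtain \<phi> where "GP k F r n \<phi>" "C = gp_class F r n \<phi>" "\<forall>\<psi>\<in>C. gp_class F'' r n (gp_comp r n f \<psi>) = M"
    unfolding Real_set_def Gr_def by blast
  moreover have "\<phi> \<in> hf_funs F r n"
    using GP_in_hf_funs[OF \<open>GP k F r n \<phi>\<close>] .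
  ultimately show "\<exists>\<phi>. GP k F r n \<phi> \<and> C = gp_class F r n \<phi> \<and> gp_class F'' r n (gp_comp r n f \<phi>) = M"
    using gp_class_self[OF assms(1)] by blast
next
  assume "\<exists>\<phi>. GP k F r n \<phi> \<and> C = gp_class F r n \<phi> \<and> gp_class F'' r n (gp_comp r n f \<phi>) = M"
  then obtain \<phi> where \<phi>: "GP k F r n \<phi>" "C = gp_class F r n \<phi>" "gp_class F'' r n (gp_comp r n f \<phi>) = M"
    by blast
  have "gp_class F'' r n (gp_comp r n f \<psi>) = M" if \<psi>: "\<psi> \<in> C" for \<psi>
  proof -
    have \<phi>_funs: "\<phi> \<in> hf_funs F r n"
      using GP_in_hf_funs[OF \<phi>(1)] .
    obtain \<alpha> where \<alpha>: "\<alpha> \<in> hf_carrier F" "\<alpha> \<noteq> hf_zero F" and \<psi>_eq: "\<psi> = gp_scale F r n \<alpha> \<phi>"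
      using \<psi> \<phi>(2) unfolding gp_class_altdef by blast
    have "gp_class F r n \<phi> = gp_class F r n \<psi>"
      unfolding \<psi>_eq gp_class_gp_scale[OF assms(1) \<alpha> \<phi>_funs] ..
    then show ?thesis
      using gp_class_gp_comp[OF assms \<phi>_funs gp_scale_in_hf_funs[OF assms(1) \<alpha>(1) \<phi>_funs]] \<psi>_eq \<phi>(3)
      by simp
  qed
  then show "C \<in> Real_set k F F'' f r n M"
    using \<phi> unfolding Real_set_def Gr_def by blast
qed

lemma Real_set_gp_comp_eq:
  assumes "hyperfield F" "\<phi> \<in> hf_funs F r n" "gp_class F r n \<phi> \<in> Real_set k F F'' f r n M"
  shows "gp_class F'' r n (gp_comp r n f \<phi>) = M"
  using assms gp_class_self[OF assms(1,2)] unfolding Real_set_def by blast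

lemma Real_set_same_zeros:
  assumes "hyperfield F" "hyperfield F''" "hf_hom F F'' f"
    and "\<phi> \<in> hf_funs F r n" "gp_class F r n \<phi> \<in> Real_set k F F'' f r n M"
    and "\<psi> \<in> hf_funs F r n" "gp_class F r n \<psi> \<in> Real_set k F F'' f r n M"
    and "xs \<in> tuples r n"
  shows "\<phi> xs = hf_zero F \<longleftrightarrow> \<psi> xs = hf_zero F"
  using gp_class_eq_zero_iff[OF assms(2) gp_comp_in_hf_funs[OF assms(3,4)] gp_comp_in_hf_funs[OF assms(3,6)] _ assms(8)]
    Real_set_gp_comp_eq[OF assms(1,4,5)] Real_set_gp_comp_eq[OF assms(1,6,7)]
    gp_comp_eq_zero_iff[OF assms(1-4,8)] gp_comp_eq_zero_iff[OF assms(1-3,6,8)]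
  by simp

lemma Real_set_gp_comp:
  assumes "hyperfield F" "hyperfield F'" "hyperfield F''"
    and "hf_hom F F' h" "hf_hom F F'' f" "hf_hom F' F'' f'"
    and "\<And>x. x \<in> hf_carrier F \<Longrightarrow> f' (h x) = f x"
    and "\<phi> \<in> hf_funs F r n" "gp_class F r n \<phi> \<in> Real_set k F F'' f r n M"
  shows "gp_class F' r n (gp_comp r n h \<phi>) \<in> Real_set k F' F'' f' r n M"
proof -
  obtain \<psi> where \<psi>: "GP k F r n \<psi>" "gp_class F r n \<phi> = gp_class F r n \<psi>"
      "gp_class F'' r n (gp_comp r n f \<psi>) = M"
    using assms(9) unfolding Real_set_iff[OF assms(1,3,5)] by blast
  have \<psi>_funs: "\<psi> \<in> hf_funs F r n"
    using GP_in_hf_funs[OF \<psi>(1)] .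
  have "gp_comp r n f' (gp_comp r n h \<psi>) = gp_comp r n f \<psi>"
    unfolding gp_comp_def using assms(7) hf_funsD[OF \<psi>_funs] by (auto intro!: restrict_ext)
  then have "gp_class F' r n (gp_comp r n h \<psi>) \<in> Real_set k F' F'' f' r n M"
    unfolding Real_set_iff[OF assms(2,3,6)] using GP_hom[OF assms(1,2,4) \<psi>(1)] \<psi>(3) by auto
  then show ?thesis
    using gp_class_gp_comp[OF assms(1,2,4,8) \<psi>_funs \<psi>(2)] by simp
qed

lemma openin_quotient_topology:
  "openin (quotient_topology X q) U \<longleftrightarrow> U \<subseteq> q ` topspace X \<and> openin X {x \<in> topspace X. q x \<in> U}"
proof -
  have "istopology (\<lambda>U. U \<subseteq> q ` topspace X \<and> openin X {x \<in> topspace X. q x \<in> U})"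
    unfolding istopology_def
  proof (rule conjI; intro allI impI)
    fix U V
    assume "U \<subseteq> q ` topspace X \<and> openin X {x \<in> topspace X. q x \<in> U}"
      and "V \<subseteq> q ` topspace X \<and> openin X {x \<in> topspace X. q x \<in> V}"
    moreover have "{x \<in> topspace X. q x \<in> U \<inter> V} = {x \<in> topspace X. q x \<in> U} \<inter> {x \<in> topspace X. q x \<in> V}"
      by auto
    ultimately show "U \<inter> V \<subseteq> q ` topspace X \<and> openin X {x \<in> topspace X. q x \<in> U \<inter> V}"
      by auto
  next
    fix \<U> assume \<U>: "\<forall>U\<in>\<U>. U \<subseteq> q ` topspace X \<and> openin X {x \<in> topspace X. q x \<in> U}"
    have "{x \<in> topspace X. q x \<in> \<Union>\<U>} = (\<Union>U\<in>\<U>. {x \<in> topspace X. q x \<in> U})"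
      by auto
    then show "\<Union>\<U> \<subseteq> q ` topspace X \<and> openin X {x \<in> topspace X. q x \<in> \<Union>\<U>}"
      using \<U> by auto
  qed
  then show ?thesis unfolding quotient_topology_def by simp
qed

lemma topspace_quotient_topology: "topspace (quotient_topology X q) = q ` topspace X"
proof -
  have "{x \<in> topspace X. q x \<in> q ` topspace X} = topspace X"
    by auto
  then have "openin (quotient_topology X q) (q ` topspace X)"
    unfolding openin_quotient_topology by simp
  then show ?thesis
    using openin_subset openin_quotient_topology[of X q "topspace (quotient_topology X q)"] by blast
qed

lemma quotient_map_quotient_topology: "quotient_map X (quotient_topology X q) q"
  unfolding quotient_map_def topspace_quotient_topology openin_quotient_topology by auto

lemma open_map_quotient_topology:
  assumes "\<And>U. openin X U \<Longrightarrow> openin X {x \<in> topspace X. q x \<in> q ` U}"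
  shows "open_map X (quotient_topology X q) q"
  unfolding open_map_def openin_quotient_topology using assms openin_subset by blast

lemma openin_zero_coarse:
  "openin (zero_coarse F T) U \<longleftrightarrow> U = topspace T \<or> (openin T U \<and> hf_zero F \<notin> U)"
proof -
  have "istopology (\<lambda>U. U = topspace T \<or> (openin T U \<and> hf_zero F \<notin> U))"
    unfolding istopology_def
  proof (rule conjI; intro allI impI)
    fix U V assume "U = topspace T \<or> openin T U \<and> hf_zero F \<notin> U"
      and "V = topspace T \<or> openin T V \<and> hf_zero F \<notin> V"
    then show "U \<inter> V = topspace T \<or> openin T (U \<inter> V) \<and> hf_zero F \<notin> U \<inter> V"
      using openin_subset[of T U] openin_subset[of T V] by (auto simp: Int_absorb1 Int_absorb2)
  next
    fix \<U> assume "\<forall>U\<in>\<U>. U = topspace T \<or> openin T U \<and> hf_zero F \<notin> U"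
    moreover have "\<Union>\<U> \<subseteq> topspace T"
      using calculation openin_subset by blast
    ultimately show "\<Union>\<U> = topspace T \<or> openin T (\<Union>\<U>) \<and> hf_zero F \<notin> \<Union>\<U>"
      by (cases "topspace T \<in> \<U>") auto
  qed
  then show ?thesis unfolding zero_coarse_def by simp
qed

lemma subtopology_zero_coarse:
  assumes "openin T S" "hf_zero F \<notin> S"
  shows "subtopology (zero_coarse F T) S = subtopology T S"
  unfolding topology_eq openin_subtopology openin_zero_coarse
proof (intro allI iffI)
  fix U assume "\<exists>V. (V = topspace T \<or> openin T V \<and> hf_zero F \<notin> V) \<and> U = V \<inter> S"
  then show "\<exists>V. openin T V \<and> U = V \<inter> S" by auto
next
  fix U assume "\<exists>V. openin T V \<and> U = V \<inter> S"
  then obtain V where "openin T V" "U = V \<inter> S" by blast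
  then show "\<exists>V. (V = topspace T \<or> openin T V \<and> hf_zero F \<notin> V) \<and> U = V \<inter> S"
    using assms by (intro exI[of _ "V \<inter> S"]) auto
qed

lemma continuous_map_zero_coarse_iff:
  assumes "openin T S" "hf_zero F \<notin> S" "g ` topspace X \<subseteq> S"
  shows "continuous_map X (zero_coarse F T) g \<longleftrightarrow> continuous_map X T g"
proof -
  have "continuous_map X (zero_coarse F T) g \<longleftrightarrow> continuous_map X (subtopology (zero_coarse F T) S) g"
    using assms(3) by (simp add: continuous_map_in_subtopology image_subset_iff_funcset)
  also have "\<dots> \<longleftrightarrow> continuous_map X T g"
    using assms by (simp add: subtopology_zero_coarse continuous_map_in_subtopology image_subset_iff_funcset)
  finally show ?thesis .
qed

lemma open_map_prod_left:
  assumes "open_map X Y f"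
  shows "open_map (prod_topology X Z) (prod_topology Y Z) (\<lambda>(x, z). (f x, z))"
  unfolding open_map_def openin_prod_topology_alt[of Y Z]
proof (intro allI impI)
  fix W y z
  assume W: "openin (prod_topology X Z) W" "(y, z) \<in> (\<lambda>(x, z). (f x, z)) ` W"
  then obtain x where x: "(x, z) \<in> W" "y = f x" by auto
  obtain U V where UV: "openin X U" "openin Z V" "x \<in> U" "z \<in> V" "U \<times> V \<subseteq> W"
    using W x(1) unfolding openin_prod_topology_alt[of X Z] by meson
  have "f ` U \<times> V \<subseteq> (\<lambda>(x, z). (f x, z)) ` W"
    using UV(5) by force
  then show "\<exists>U V. openin Y U \<and> openin Z V \<and> y \<in> U \<and> z \<in> V \<and> U \<times> V \<subseteq> (\<lambda>(x, z). (f x, z)) ` W"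
    using assms UV(1-4) x(2) unfolding open_map_def by blast
qed

lemma quotient_map_prod_left_open:
  assumes "continuous_map X Y f" "open_map X Y f" "f ` topspace X = topspace Y"
  shows "quotient_map (prod_topology X Z) (prod_topology Y Z) (\<lambda>(x, z). (f x, z))"
proof (rule continuous_open_imp_quotient_map)
  show "continuous_map (prod_topology X Z) (prod_topology Y Z) (\<lambda>(x, z). (f x, z))"
    using assms(1) by (simp add: continuous_map_prod_top)
  show "open_map (prod_topology X Z) (prod_topology Y Z) (\<lambda>(x, z). (f x, z))"
    using open_map_prod_left[OF assms(2)] .
  show "(\<lambda>(x, z). (f x, z)) ` topspace (prod_topology X Z) = topspace (prod_topology Y Z)"
    using assms(3) by (force simp: topspace_prod_topology)
qed

definition nonzero_funs :: "('a, 'm) hyperfield_scheme \<Rightarrow> nat \<Rightarrow> nat \<Rightarrow> (nat list \<Rightarrow> 'a) set"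
  where "nonzero_funs F r n = hf_funs F r n - {restrict (\<lambda>_. hf_zero F) (tuples r n)}"

definition funs_top :: "('a, 'm) hyperfield_scheme \<Rightarrow> 'a topology \<Rightarrow> nat \<Rightarrow> nat \<Rightarrow> (nat list \<Rightarrow> 'a) topology"
  where "funs_top F T r n = subtopology (product_topology (\<lambda>_. T) (tuples r n)) (nonzero_funs F r n)"

lemma proj_space_top_eq: "proj_space_top F T r n = quotient_topology (funs_top F T r n) (gp_class F r n)"
  unfolding proj_space_top_def funs_top_def nonzero_funs_def ..

lemma topspace_product_topology_hf_funs:
  "topological_hyperfield F T \<Longrightarrow> topspace (product_topology (\<lambda>_. T) (tuples r n)) = hf_funs F r n"
  unfolding topological_hyperfield_def hf_funs_def by simp

lemma topspace_funs_top:
  assumes "topological_hyperfield F T"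
  shows "topspace (funs_top F T r n) = nonzero_funs F r n"
  unfolding funs_top_def nonzero_funs_def topspace_subtopology topspace_product_topology_hf_funs[OF assms]
  by blast

lemma nonzero_funs_iff: "\<phi> \<in> nonzero_funs F r n \<longleftrightarrow> \<phi> \<in> hf_funs F r n \<and> (\<exists>xs\<in>tuples r n. \<phi> xs \<noteq> hf_zero F)"
  unfolding nonzero_funs_def hf_funs_def by (auto simp: PiE_iff extensional_def fun_eq_iff)

lemma GP_in_nonzero_funs: "GP k F r n \<phi> \<Longrightarrow> \<phi> \<in> nonzero_funs F r n"
  unfolding nonzero_funs_iff by (cases k) (simp_all add: GP_def strong_GP_def weak_GP_def)

lemma gp_scale_in_nonzero_funs:
  assumes "hyperfield F" "\<alpha> \<in> hf_carrier F" "\<alpha> \<noteq> hf_zero F" "\<phi> \<in> nonzero_funs F r n"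
  shows "gp_scale F r n \<alpha> \<phi> \<in> nonzero_funs F r n"
proof -
  obtain xs where xs: "xs \<in> tuples r n" "\<phi> xs \<noteq> hf_zero F" and \<phi>: "\<phi> \<in> hf_funs F r n"
    using assms(4) unfolding nonzero_funs_iff by blast
  then have "gp_scale F r n \<alpha> \<phi> xs \<noteq> hf_zero F"
    using hf_mul_eq_zero_iff[OF assms(1,2) hf_funsD[OF \<phi> xs(1)]] assms(3) by simp
  then show ?thesis
    unfolding nonzero_funs_iff using gp_scale_in_hf_funs[OF assms(1,2) \<phi>] xs(1) by blast
qed

lemma gp_comp_in_nonzero_funs:
  assumes "hyperfield F" "hyperfield F'" "hf_hom F F' h" "\<phi> \<in> nonzero_funs F r n"
  shows "gp_comp r n h \<phi> \<in> nonzero_funs F' r n"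
  using assms gp_comp_in_hf_funs[OF assms(3)] gp_comp_eq_zero_iff[OF assms(1-3)]
  unfolding nonzero_funs_iff by blast

lemma continuous_map_gp_scale:
  assumes "topological_hyperfield F T" "\<alpha> \<in> hf_carrier F"
  shows "continuous_map (product_topology (\<lambda>_. T) (tuples r n)) (product_topology (\<lambda>_. T) (tuples r n))
           (gp_scale F r n \<alpha>)"
  unfolding continuous_map_componentwise
proof (intro conjI ballI)
  show "gp_scale F r n \<alpha> ` topspace (product_topology (\<lambda>_. T) (tuples r n)) \<subseteq> extensional (tuples r n)"
    unfolding gp_scale_def by auto
  fix xs assume xs: "xs \<in> tuples r n"
  have mul: "continuous_map (prod_topology T T) T (\<lambda>(x, y). hf_mul F x y)"
    and \<alpha>: "\<alpha> \<in> topspace T"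
    using assms unfolding topological_hyperfield_def by auto
  have "continuous_map (product_topology (\<lambda>_. T) (tuples r n)) (prod_topology T T) (\<lambda>\<phi>. (\<alpha>, \<phi> xs))"
    using \<alpha> xs by (intro continuous_map_pairedI continuous_map_product_projection) auto
  from continuous_map_compose[OF this mul]
  show "continuous_map (product_topology (\<lambda>_. T) (tuples r n)) T (\<lambda>\<phi>. gp_scale F r n \<alpha> \<phi> xs)"
    using xs by (simp add: o_def)
qed

lemma gp_class_saturation:
  assumes F: "hyperfield F" and U: "U \<subseteq> nonzero_funs F r n"
  shows "{\<phi> \<in> nonzero_funs F r n. gp_class F r n \<phi> \<in> gp_class F r n ` U}
       = (\<Union>\<alpha>\<in>hf_carrier F - {hf_zero F}. {\<phi> \<in> nonzero_funs F r n. gp_scale F r n \<alpha> \<phi> \<in> U})"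
proof (intro equalityI subsetI)
  fix \<phi> assume "\<phi> \<in> {\<phi> \<in> nonzero_funs F r n. gp_class F r n \<phi> \<in> gp_class F r n ` U}"
  then obtain u where \<phi>: "\<phi> \<in> nonzero_funs F r n" and u: "u \<in> U" "gp_class F r n u = gp_class F r n \<phi>"
    by auto
  have u_funs: "u \<in> hf_funs F r n" and \<phi>_funs: "\<phi> \<in> hf_funs F r n"
    using U u(1) \<phi> unfolding nonzero_funs_def by auto
  obtain \<alpha> where \<alpha>: "\<alpha> \<in> hf_carrier F" "\<alpha> \<noteq> hf_zero F" and \<phi>_eq: "\<phi> = gp_scale F r n \<alpha> u"
    using gp_class_eqE[OF F \<phi>_funs u(2)] .
  obtain \<delta> where \<delta>: "\<delta> \<in> hf_carrier F" "\<delta> \<noteq> hf_zero F" "hf_mul F \<alpha> \<delta> = hf_one F"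
    using hf_inverse_ex[OF F \<alpha>] by auto
  have "gp_scale F r n \<delta> \<phi> = u"
    unfolding \<phi>_eq using \<alpha> \<delta> u_funs
    by (simp add: gp_scale_gp_scale[OF F] hf_mul_comm[OF F, of \<delta> \<alpha>] gp_scale_one[OF F])
  then show "\<phi> \<in> (\<Union>\<alpha>\<in>hf_carrier F - {hf_zero F}. {\<phi> \<in> nonzero_funs F r n. gp_scale F r n \<alpha> \<phi> \<in> U})"
    using \<phi> \<delta> u(1) by auto
next
  fix \<phi> assume "\<phi> \<in> (\<Union>\<alpha>\<in>hf_carrier F - {hf_zero F}. {\<phi> \<in> nonzero_funs F r n. gp_scale F r n \<alpha> \<phi> \<in> U})"
  then obtain \<alpha> where \<alpha>: "\<alpha> \<in> hf_carrier F" "\<alpha> \<noteq> hf_zero F"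
    and \<phi>: "\<phi> \<in> nonzero_funs F r n" "gp_scale F r n \<alpha> \<phi> \<in> U"
    by auto
  have "gp_class F r n \<phi> = gp_class F r n (gp_scale F r n \<alpha> \<phi>)"
    using gp_class_gp_scale[OF F \<alpha>] \<phi>(1) unfolding nonzero_funs_iff by simp
  then show "\<phi> \<in> {\<phi> \<in> nonzero_funs F r n. gp_class F r n \<phi> \<in> gp_class F r n ` U}"
    using \<phi> by auto
qed

lemma open_map_gp_class:
  assumes TF: "topological_hyperfield F T"
  shows "open_map (funs_top F T r n) (proj_space_top F T r n) (gp_class F r n)"
  unfolding proj_space_top_eq
proof (rule open_map_quotient_topology)
  have F: "hyperfield F" using TF unfolding topological_hyperfield_def by simp
  fix U assume U: "openin (funs_top F T r n) U"
  have scale_cont: "continuous_map (funs_top F T r n) (funs_top F T r n) (gp_scale F r n \<alpha>)"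
    if \<alpha>: "\<alpha> \<in> hf_carrier F - {hf_zero F}" for \<alpha>
    unfolding continuous_map_in_subtopology funs_top_def
    using continuous_map_from_subtopology[OF continuous_map_gp_scale[OF TF]] \<alpha>
      gp_scale_in_nonzero_funs[OF F] topspace_funs_top[OF TF, unfolded funs_top_def]
    by auto
  have "{\<phi> \<in> topspace (funs_top F T r n). gp_class F r n \<phi> \<in> gp_class F r n ` U}
      = (\<Union>\<alpha>\<in>hf_carrier F - {hf_zero F}. {\<phi> \<in> topspace (funs_top F T r n). gp_scale F r n \<alpha> \<phi> \<in> U})"
    using gp_class_saturation[OF F] openin_subset[OF U] unfolding topspace_funs_top[OF TF] by simp
  also have "openin (funs_top F T r n) \<dots>"
    using openin_continuous_map_preimage[OF scale_cont U] by auto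
  finally show "openin (funs_top F T r n) {\<phi> \<in> topspace (funs_top F T r n). gp_class F r n \<phi> \<in> gp_class F r n ` U}" .
qed

lemma Real_top_eq:
  "Real_top k F T F'' f r n M
     = subtopology (quotient_topology (funs_top F T r n) (gp_class F r n)) (Real_set k F F'' f r n M)"
proof -
  have "Gr k F r n \<inter> Real_set k F F'' f r n M = Real_set k F F'' f r n M"
    unfolding Real_set_def by blast
  then show ?thesis
    unfolding Real_top_def Gr_top_def proj_space_top_eq subtopology_subtopology by simp
qed

lemma quotient_map_Real_top:
  assumes TF: "topological_hyperfield F T"
  shows "quotient_map
           (prod_topology (subtopology (funs_top F T r n)
              {\<phi> \<in> nonzero_funs F r n. gp_class F r n \<phi> \<in> Real_set k F F'' f r n M}) Z)
           (prod_topology (Real_top k F T F'' f r n M) Z) (\<lambda>(\<phi>, z). (gp_class F r n \<phi>, z))"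
  unfolding Real_top_eq
proof (rule quotient_map_prod_left_open)
  let ?A = "{\<phi> \<in> nonzero_funs F r n. gp_class F r n \<phi> \<in> Real_set k F F'' f r n M}"
  let ?Q = "quotient_topology (funs_top F T r n) (gp_class F r n)"
  have A: "{\<phi> \<in> topspace (funs_top F T r n). gp_class F r n \<phi> \<in> Real_set k F F'' f r n M} = ?A"
    unfolding topspace_funs_top[OF TF] ..
  have Real_set: "Real_set k F F'' f r n M \<subseteq> gp_class F r n ` ?A"
    unfolding Real_set_def Gr_def using GP_in_nonzero_funs by blast
  show "continuous_map (subtopology (funs_top F T r n) ?A) (subtopology ?Q (Real_set k F F'' f r n M))
          (gp_class F r n)"
    unfolding continuous_map_in_subtopology
    using continuous_map_from_subtopology[OF quotient_imp_continuous_map[OF quotient_map_quotient_topology]]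
    by auto
  show "open_map (subtopology (funs_top F T r n) ?A) (subtopology ?Q (Real_set k F F'' f r n M))
          (gp_class F r n)"
    using open_map_restriction[OF open_map_gp_class[OF TF, unfolded proj_space_top_eq] A] .
  show "gp_class F r n ` topspace (subtopology (funs_top F T r n) ?A)
          = topspace (subtopology ?Q (Real_set k F F'' f r n M))"
    using Real_set unfolding topspace_subtopology topspace_quotient_topology topspace_funs_top[OF TF]
    by auto
qed

lemma continuous_map_homotopy_nonzero:
  fixes H :: "'a \<Rightarrow> real \<Rightarrow> 'b"
  assumes TF: "topological_hyperfield F T" and TF': "topological_hyperfield F' T'"
    and H_cont: "continuous_map (prod_topology (zero_coarse F T) (top_of_set {0..1}))
                   (zero_coarse F' T') (\<lambda>(x, t). H x t)"
    and H_hom: "\<And>t. t \<in> {0..1} \<Longrightarrow> hf_hom F F' (\<lambda>x. H x t)"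
    and g: "continuous_map X T g" "g ` topspace X \<subseteq> hf_carrier F - {hf_zero F}"
    and s: "continuous_map X (top_of_set {0..1}) s"
  shows "continuous_map X T' (\<lambda>x. H (g x) (s x))"
proof -
  have F: "hyperfield F" and F': "hyperfield F'"
    and open_units: "openin T (hf_carrier F - {hf_zero F})"
    and open_units': "openin T' (hf_carrier F' - {hf_zero F'})"
    using TF TF' unfolding topological_hyperfield_def by auto
  have "continuous_map X (zero_coarse F T) g"
    using continuous_map_zero_coarse_iff[of T _ F, OF open_units _ g(2)] g(1) by simp
  then have "continuous_map X (prod_topology (zero_coarse F T) (top_of_set {0..1})) (\<lambda>x. (g x, s x))"
    using s by (rule continuous_map_pairedI)
  from continuous_map_compose[OF this H_cont]
  have "continuous_map X (zero_coarse F' T') (\<lambda>x. H (g x) (s x))"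
    by (simp add: o_def)
  moreover have "(\<lambda>x. H (g x) (s x)) ` topspace X \<subseteq> hf_carrier F' - {hf_zero F'}"
  proof (rule image_subsetI)
    fix x assume x: "x \<in> topspace X"
    then have "s x \<in> {0..1}" using continuous_map_image_subset_topspace[OF s] by auto
    then show "H (g x) (s x) \<in> hf_carrier F' - {hf_zero F'}"
      using g(2) x hf_hom_closed[OF H_hom] hf_hom_eq_zero_iff[OF F F' H_hom] by auto
  qed
  ultimately show ?thesis
    using continuous_map_zero_coarse_iff[of T' _ F' "\<lambda>x. H (g x) (s x)" X, OF open_units'] by simp
qed

lemma continuous_map_gp_comp_homotopy:
  fixes H :: "'a \<Rightarrow> real \<Rightarrow> 'b"
  assumes TF: "topological_hyperfield F T" and TF': "topological_hyperfield F' T'"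
    and H_cont: "continuous_map (prod_topology (zero_coarse F T) (top_of_set {0..1}))
                   (zero_coarse F' T') (\<lambda>(x, t). H x t)"
    and H_hom: "\<And>t. t \<in> {0..1} \<Longrightarrow> hf_hom F F' (\<lambda>x. H x t)"
    and A: "A \<subseteq> nonzero_funs F r n"
    and same_zeros: "\<And>\<phi> \<psi> xs. \<phi> \<in> A \<Longrightarrow> \<psi> \<in> A \<Longrightarrow> xs \<in> tuples r n \<Longrightarrow>
                        \<phi> xs = hf_zero F \<longleftrightarrow> \<psi> xs = hf_zero F"
  shows "continuous_map (prod_topology (subtopology (funs_top F T r n) A) (top_of_set {0..1}))
           (funs_top F' T' r n) (\<lambda>(\<phi>, t). gp_comp r n (\<lambda>x. H x t) \<phi>)"
proof -
  let ?D = "prod_topology (subtopology (funs_top F T r n) A) (top_of_set {0..1::real})"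
  have F: "hyperfield F" and F': "hyperfield F'"
    using TF TF' unfolding topological_hyperfield_def by auto
  have D: "topspace ?D = A \<times> {0..1}"
    using A by (simp add: topspace_prod_topology topspace_funs_top[OF TF] Int_absorb1)
  have A_funs: "\<phi> \<in> hf_funs F r n" if "\<phi> \<in> A" for \<phi>
    using that A unfolding nonzero_funs_def by auto
  have coordinate: "continuous_map ?D T' (\<lambda>z. H (fst z xs) (snd z))" if xs: "xs \<in> tuples r n" for xs
  proof (cases "\<forall>\<phi>\<in>A. \<phi> xs = hf_zero F")
    case True
    have "continuous_map ?D T' (\<lambda>_. hf_zero F')"
      using hf_zero_closed[OF F'] TF' unfolding topological_hyperfield_def by simp
    moreover have "hf_zero F' = H (fst z xs) (snd z)" if "z \<in> topspace ?D" for z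
      using that True D hf_hom_zero[OF H_hom] by auto
    ultimately show ?thesis
      by (rule continuous_map_eq)
  next
    case False
    then have nonzero: "\<phi> xs \<noteq> hf_zero F" if "\<phi> \<in> A" for \<phi>
      using same_zeros[OF that _ xs] by blast
    have "continuous_map (subtopology (funs_top F T r n) A) T (\<lambda>\<phi>. \<phi> xs)"
      unfolding funs_top_def subtopology_subtopology
      using continuous_map_product_projection[OF xs] by (rule continuous_map_from_subtopology)
    from continuous_map_compose[OF continuous_map_fst this]
    have "continuous_map ?D T (\<lambda>z. fst z xs)"
      by (simp add: o_def)
    moreover have "(\<lambda>z. fst z xs) ` topspace ?D \<subseteq> hf_carrier F - {hf_zero F}"
      unfolding D using nonzero hf_funsD[OF A_funs xs] by auto
    ultimately show ?thesis
      using continuous_map_homotopy_nonzero[OF TF TF' H_cont H_hom] continuous_map_snd by blast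
  qed
  show ?thesis
    unfolding funs_top_def[of F' T'] continuous_map_in_subtopology continuous_map_componentwise
  proof (intro conjI ballI)
    show "(\<lambda>(\<phi>, t). gp_comp r n (\<lambda>x. H x t) \<phi>) ` topspace ?D \<subseteq> extensional (tuples r n)"
      unfolding gp_comp_def by auto
    show "continuous_map ?D T' (\<lambda>z. (case z of (\<phi>, t) \<Rightarrow> gp_comp r n (\<lambda>x. H x t) \<phi>) xs)"
      if xs: "xs \<in> tuples r n" for xs
      by (rule continuous_map_eq[OF coordinate[OF xs]]) (simp add: case_prod_unfold xs)
    show "(\<lambda>(\<phi>, t). gp_comp r n (\<lambda>x. H x t) \<phi>) \<in> topspace ?D \<rightarrow> nonzero_funs F' r n"
      using D A gp_comp_in_nonzero_funs[OF F F' H_hom] by auto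
  qed
qed

lemma continuous_map_Real_top_homotopy:
  fixes H :: "'a \<Rightarrow> real \<Rightarrow> 'b"
  assumes TF: "topological_hyperfield F T" and TF': "topological_hyperfield F' T'"
    and F'': "hyperfield F''" and f: "hf_hom F F'' f" and f': "hf_hom F' F'' f'"
    and H_cont: "continuous_map (prod_topology (zero_coarse F T) (top_of_set {0..1}))
                   (zero_coarse F' T') (\<lambda>(x, t). H x t)"
    and H_hom: "\<And>t. t \<in> {0..1} \<Longrightarrow> hf_hom F F' (\<lambda>x. H x t)"
    and H_f: "\<And>x t. x \<in> hf_carrier F \<Longrightarrow> t \<in> {0..1} \<Longrightarrow> f' (H x t) = f x"
  shows "continuous_map
           (prod_topology (subtopology (funs_top F T r n)
              {\<phi> \<in> nonzero_funs F r n. gp_class F r n \<phi> \<in> Real_set k F F'' f r n M}) (top_of_set {0..1}))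
           (Real_top k F' T' F'' f' r n M) (\<lambda>(\<phi>, t). gp_class F' r n (gp_comp r n (\<lambda>x. H x t) \<phi>))"
proof -
  define A where "A = {\<phi> \<in> nonzero_funs F r n. gp_class F r n \<phi> \<in> Real_set k F F'' f r n M}"
  let ?D = "prod_topology (subtopology (funs_top F T r n) A) (top_of_set {0..1::real})"
  have F: "hyperfield F" and F': "hyperfield F'"
    using TF TF' unfolding topological_hyperfield_def by auto
  have A_funs: "\<phi> \<in> hf_funs F r n" if "\<phi> \<in> A" for \<phi>
    using that unfolding A_def nonzero_funs_def by auto
  have "continuous_map ?D (funs_top F' T' r n) (\<lambda>(\<phi>, t). gp_comp r n (\<lambda>x. H x t) \<phi>)"
  proof (rule continuous_map_gp_comp_homotopy[OF TF TF' H_cont H_hom])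
    show "A \<subseteq> nonzero_funs F r n"
      unfolding A_def by blast
    show "\<phi> xs = hf_zero F \<longleftrightarrow> \<psi> xs = hf_zero F" if "\<phi> \<in> A" "\<psi> \<in> A" "xs \<in> tuples r n" for \<phi> \<psi> xs
      using Real_set_same_zeros[OF F F'' f A_funs _ A_funs] that unfolding A_def by blast
  qed
  from continuous_map_compose[OF this quotient_imp_continuous_map[OF quotient_map_quotient_topology]]
  have "continuous_map ?D (quotient_topology (funs_top F' T' r n) (gp_class F' r n))
          (\<lambda>(\<phi>, t). gp_class F' r n (gp_comp r n (\<lambda>x. H x t) \<phi>))"
    by (simp add: o_def case_prod_unfold)
  moreover have "gp_class F' r n (gp_comp r n (\<lambda>x. H x t) \<phi>) \<in> Real_set k F' F'' f' r n M"
    if "\<phi> \<in> A" "t \<in> {0..1}" for \<phi> t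
    using Real_set_gp_comp[OF F F' F'' H_hom[OF that(2)] f f' H_f[OF _ that(2)] A_funs[OF that(1)]] that(1)
    unfolding A_def by simp
  ultimately show ?thesis
    unfolding Real_top_eq continuous_map_in_subtopology A_def[symmetric]
    by (auto simp: topspace_prod_topology)
qed

theorem theorem5p3:
  fixes F :: "('a, 'm) hyperfield_scheme" and T :: "'a topology"
    and F' :: "('b, 'n) hyperfield_scheme" and T' :: "'b topology"
    and F'' :: "('c, 'o) hyperfield_scheme"
    and f :: "'a \<Rightarrow> 'c" and f' :: "'b \<Rightarrow> 'c"
    and k :: gp_kind and r n :: nat
    and M :: "(nat list \<Rightarrow> 'c) set"
    and H :: "'a \<Rightarrow> real \<Rightarrow> 'b"
  assumes "topological_hyperfield F T"
    and "topological_hyperfield F' T'"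
    and "hyperfield F''"
    and "hf_hom F F'' f"
    and "hf_hom F' F'' f'"
    and "M \<in> Gr k F'' r n"
    and "continuous_map (prod_topology (zero_coarse F T) (top_of_set {0..1}))
                        (zero_coarse F' T') (\<lambda>(x, t). H x t)"
    and "\<And>t. t \<in> {0..1} \<Longrightarrow> hf_hom F F' (\<lambda>x. H x t)"
    and "\<And>x t. x \<in> hf_carrier F \<Longrightarrow> t \<in> {0..1} \<Longrightarrow> f' (H x t) = f x"
  shows "\<exists>G. continuous_map
               (prod_topology (Real_top k F T F'' f r n M) (top_of_set {0..1}))
               (Real_top k F' T' F'' f' r n M) G
           \<and> (\<forall>\<phi> t. GP k F r n \<phi> \<and> gp_class F r n \<phi> \<in> Real_set k F F'' f r n M \<and> t \<in> {0..1}
                 \<longrightarrow> G (gp_class F r n \<phi>, t) = gp_class F' r n (gp_comp r n (\<lambda>x. H x t) \<phi>))"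
proof -
  have F: "hyperfield F" and F': "hyperfield F'"
    using assms(1,2) unfolding topological_hyperfield_def by auto
  let ?X = "prod_topology (subtopology (funs_top F T r n)
              {\<phi> \<in> nonzero_funs F r n. gp_class F r n \<phi> \<in> Real_set k F F'' f r n M}) (top_of_set {0..1::real})"
  define p where "p = (\<lambda>(\<phi>, t). (gp_class F r n \<phi>, t::real))"
  define g where "g = (\<lambda>(\<phi>, t). gp_class F' r n (gp_comp r n (\<lambda>x. H x t) \<phi>))"
  have fibres: "g z = g z'" if "z \<in> topspace ?X" "z' \<in> topspace ?X" "p z = p z'" for z z'
  proof -
    obtain \<phi> t \<phi>' t' where z: "z = (\<phi>, t)" "z' = (\<phi>', t')"
      by (cases z, cases z') simp
    have \<phi>: "\<phi> \<in> hf_funs F r n" "\<phi>' \<in> hf_funs F r n" and t: "t \<in> {0..1}"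
      using that(1,2) unfolding z
      by (auto simp: topspace_prod_topology topspace_funs_top[OF assms(1)] nonzero_funs_def)
    have "gp_class F r n \<phi> = gp_class F r n \<phi>'" "t' = t"
      using that(3) unfolding z p_def by simp_all
    then show ?thesis
      using gp_class_gp_comp[OF F F' assms(8)[OF t] \<phi>] unfolding z g_def by simp
  qed
  obtain G where G_cont: "continuous_map (prod_topology (Real_top k F T F'' f r n M) (top_of_set {0..1}))
                    (Real_top k F' T' F'' f' r n M) G"
      and G_lift: "\<And>z. z \<in> topspace ?X \<Longrightarrow> G (p z) = g z"
  proof (rule quotient_map_lift_exists)
    show "quotient_map ?X (prod_topology (Real_top k F T F'' f r n M) (top_of_set {0..1})) p"
      unfolding p_def by (rule quotient_map_Real_top[OF assms(1)])
    show "continuous_map ?X (Real_top k F' T' F'' f' r n M) g"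
      unfolding g_def by (rule continuous_map_Real_top_homotopy[OF assms(1-5,7-9)])
  qed (use fibres in blast)+
  show ?thesis
  proof (intro exI[of _ G] conjI allI impI)
    fix \<phi> and t :: real
    assume "GP k F r n \<phi> \<and> gp_class F r n \<phi> \<in> Real_set k F F'' f r n M \<and> t \<in> {0..1}"
    then have "(\<phi>, t) \<in> topspace ?X"
      using GP_in_nonzero_funs[of k F r n \<phi>]
      by (simp add: topspace_prod_topology topspace_funs_top[OF assms(1)])
    from G_lift[OF this] show "G (gp_class F r n \<phi>, t) = gp_class F' r n (gp_comp r n (\<lambda>x. H x t) \<phi>)"
      unfolding p_def g_def by simp
  qed (rule G_cont)
qed

end
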